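(* For any two relatively prime integers $m,n\ge2$, \[\operatorname{spec}(U_m)\cap\operatorname{spec}(U_n)=\{0,1,-1\},\] where $\operatorname{spec}(U_q)$ is the set of $\lambda\in\mathbb{R}$ such that $U_qf=\lambda f$ for some nonzero $f\in\mathcal{R}$.
   Context: $\mathcal{R}$ denotes the real vector space of rational functions $f(x)=A(x)/B(x)$ with $A,B\in\mathbb{R}[x]$, $B(0)\neq 0$ and $\deg A<\deg B$. For $f$ with Taylor expansion $f(x)=\sum_{n\ge0}a_nx^n$ at $0$ and a positive integer $q$, $U_qf(x)=\sum_{n\ge 0}a_{qn}x^n$. *)

theory Defs
  imports "HOL-Computational_Algebra.Computational_Algebra"
begin

text \<open>Elements of the space R are identified with their Taylor expansions at 0
  (a rational function with B(0) nonzero is determined by its Taylor series).\<close>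

definition ratfun_space :: "real fps set" where
  "ratfun_space = {fps_of_poly A / fps_of_poly B | A B.
      poly B 0 \<noteq> 0 \<and> degree A < degree B}"

definition U_op :: "nat \<Rightarrow> real fps \<Rightarrow> real fps" where
  "U_op q f = Abs_fps (\<lambda>n. fps_nth f (q * n))"

definition spec_U :: "nat \<Rightarrow> real set" where
  "spec_U q = {c. \<exists>f \<in> ratfun_space. f \<noteq> 0 \<and> U_op q f = fps_const c * f}"

end

theory Submission
  imports Defs "HOL-Computational_Algebra.Field_as_Ring"
begin

(* Let F = A/B, in lowest terms over the complex numbers, satisfy U_q F = c F with c nonzero, and
   write B = B(0) * prod (1 - b X). Since U_q (G * H(X^q)) = U_q G * H, applying U_q to
   F * prod (1 - b^q X^q) shows that B divides prod (1 - b^q X); so every inverse root b of B is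
   the q-th power of another one, and a finite set closed under q-th roots consists of roots of
   unity. Hence F (1 - X^N)^D is a polynomial, and on each residue class mod N the coefficients
   of F are eventually given by one polynomial Q in the index. The indices q^(J+iL) k0 stay in
   one residue class, so Q(q^L x) = c^L Q(x) at infinitely many points and c^L = q^(L deg Q).
   For coprime m and n the two identities force |c| = 1. *)

definition fps_decimate :: "nat \<Rightarrow> 'a::zero fps \<Rightarrow> 'a fps" where
  "fps_decimate q F = Abs_fps (\<lambda>n. F $ (q * n))"

lemma fps_decimate_nth [simp]: "fps_decimate q F $ n = F $ (q * n)"
  by (simp add: fps_decimate_def)

lemma U_op_eq_fps_decimate: "U_op q = fps_decimate q"
  by (simp add: U_op_def fps_decimate_def fun_eq_iff)

lemma fps_decimate_eigen_nth:
  fixes F :: "'a::comm_ring_1 fps"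
  assumes "fps_decimate q F = fps_const c * F"
  shows "F $ (q ^ j * k) = c ^ j * F $ k"
proof (induction j)
  case (Suc j)
  have "F $ (q * (q ^ j * k)) = c * F $ (q ^ j * k)"
    using arg_cong[OF assms, of "\<lambda>G. G $ (q ^ j * k)"] by simp
  then show ?case using Suc by (simp add: mult.assoc)
qed simp

lemma fps_decimate_fps_of_poly:
  fixes p :: "'a::comm_ring_1 poly"
  assumes "q \<ge> 1"
  obtains P where "fps_decimate q (fps_of_poly p) = fps_of_poly P"
proof
  show "fps_decimate q (fps_of_poly p) = fps_of_poly (\<Sum>i\<le>degree p. monom (coeff p (q * i)) i)"
  proof (rule fps_ext)
    fix n
    have "q * n > degree p" if "n > degree p" using assms that
      by (metis less_le_trans mult_1 mult_le_mono1)
    then show "fps_decimate q (fps_of_poly p) $ n = fps_of_poly (\<Sum>i\<le>degree p. monom (coeff p (q * i)) i) $ n"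
      by (auto simp: coeff_sum coeff_eq_0)
  qed
qed

lemma fps_decimate_X_power_mult:
  assumes "q \<ge> 1"
  shows "fps_decimate q (fps_X ^ q * G) = fps_X * fps_decimate q G"
proof (rule fps_ext)
  fix n
  show "fps_decimate q (fps_X ^ q * G) $ n = (fps_X * fps_decimate q G) $ n"
    using assms by (cases n) (simp_all add: fps_X_power_mult_nth)
qed

lemma fps_decimate_mult_pcompose_monom:
  fixes G :: "'a::comm_ring_1 fps"
  assumes "q \<ge> 1"
  shows "fps_decimate q (G * fps_of_poly (pcompose H (monom 1 q))) = fps_decimate q G * fps_of_poly H"
proof (induction H arbitrary: G)
  case (pCons a H)
  have linear: "fps_decimate q (fps_const a * F + F') = fps_const a * fps_decimate q F + fps_decimate q F'"
    for F F' :: "'a fps"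
    by (simp add: fps_eq_iff)
  have "G * fps_of_poly (pcompose (pCons a H) (monom 1 q))
        = fps_const a * G + fps_X ^ q * (G * fps_of_poly (pcompose H (monom 1 q)))"
    by (simp add: pcompose_pCons fps_of_poly_add fps_of_poly_mult fps_of_poly_monom'
        fps_of_poly_const algebra_simps)
  then have "fps_decimate q (G * fps_of_poly (pcompose (pCons a H) (monom 1 q)))
        = fps_const a * fps_decimate q G + fps_X * (fps_decimate q G * fps_of_poly H)"
    by (simp only: linear fps_decimate_X_power_mult[OF assms] pCons.IH)
  also have "\<dots> = fps_decimate q G * fps_of_poly (pCons a H)"
    by (simp add: fps_of_poly_pCons algebra_simps)
  finally show ?case .
qed (simp add: fps_eq_iff)

lemma fps_mult_eq_iff_eq_divide:
  fixes F :: "'a::field fps"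
  assumes "B $ 0 \<noteq> 0"
  shows "F * B = A \<longleftrightarrow> F = A / B"
  using assms by (auto simp: fps_divide_unit mult.assoc inverse_mult_eq_1 inverse_mult_eq_1')

lemma ratfun_space_iff:
  "F \<in> ratfun_space \<longleftrightarrow>
     (\<exists>A B. F * fps_of_poly B = fps_of_poly A \<and> poly B 0 \<noteq> 0 \<and> degree A < degree B)"
proof -
  have "F * fps_of_poly B = fps_of_poly A \<longleftrightarrow> F = fps_of_poly A / fps_of_poly B"
    if "poly B 0 \<noteq> 0" for A B :: "real poly"
    by (rule fps_mult_eq_iff_eq_divide) (use that in \<open>simp add: poly_0_coeff_0\<close>)
  then show ?thesis unfolding ratfun_space_def by blast
qed

lemma periodic_in_ratfun_space:
  fixes a :: "nat \<Rightarrow> real"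
  assumes N: "N \<ge> 1" and periodic: "\<And>k. a (k + N) = a k"
  shows "Abs_fps a \<in> ratfun_space"
proof -
  define A where "A = (\<Sum>j<N. monom (a j) j)"
  define B :: "real poly" where "B = 1 - monom 1 N"
  have coeff_A: "coeff A k = (if k < N then a k else 0)" for k
    unfolding A_def by (simp add: coeff_sum)
  have "degree A \<le> N - 1" by (rule degree_le) (auto simp: coeff_A)
  then have "degree A < N" using N by simp
  moreover have coeff_B: "coeff B k = (if k = 0 then 1 else if k = N then -1 else 0)" for k
    using N unfolding B_def by auto
  then have "degree B = N"
    using N by (intro antisym degree_le le_degree) auto
  moreover have "poly B 0 \<noteq> 0" using N by (simp add: poly_0_coeff_0 coeff_B)
  moreover have "Abs_fps a * fps_of_poly B = fps_of_poly A"
  proof (rule fps_ext)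
    fix k
    have "Abs_fps a * fps_of_poly B = Abs_fps a - fps_X ^ N * Abs_fps a"
      unfolding B_def by (simp add: fps_of_poly_diff fps_of_poly_monom' algebra_simps)
    moreover have "k \<ge> N \<Longrightarrow> a k = a (k - N)" using periodic[of "k - N"] by simp
    ultimately show "(Abs_fps a * fps_of_poly B) $ k = fps_of_poly A $ k"
      by (simp add: fps_X_power_mult_nth coeff_A)
  qed
  ultimately show ?thesis unfolding ratfun_space_iff by blast
qed

lemma periodic_eigenvector_in_spec_U:
  fixes a :: "nat \<Rightarrow> real"
  assumes "N \<ge> 1" "\<And>k. a (k + N) = a k" "a k0 \<noteq> 0" "\<And>k. a (q * k) = c * a k"
  shows "c \<in> spec_U q"
proof -
  have "Abs_fps a \<noteq> 0" using assms(3) by (metis fps_nth_Abs_fps fps_zero_nth)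
  moreover have "U_op q (Abs_fps a) = fps_const c * Abs_fps a"
    using assms(4) by (simp add: U_op_eq_fps_decimate fps_eq_iff)
  ultimately show ?thesis
    using periodic_in_ratfun_space[of N a] assms(1,2) unfolding spec_U_def by blast
qed

lemma one_in_spec_U: "1 \<in> spec_U q"
  by (rule periodic_eigenvector_in_spec_U[of 1 "\<lambda>_. 1"]) auto

lemma zero_in_spec_U:
  assumes "q \<ge> 2" shows "0 \<in> spec_U q"
  by (rule periodic_eigenvector_in_spec_U[of q "\<lambda>k. if k mod q = 1 then 1 else 0" 1])
    (use assms in auto)

(* sin (2 pi k / (q + 1)) is odd and (q + 1)-periodic in k, and q k = -k (mod q + 1). *)
lemma minus_one_in_spec_U:
  assumes "q \<ge> 2" shows "-1 \<in> spec_U q"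
proof (rule periodic_eigenvector_in_spec_U[of "q + 1" "\<lambda>k. sin (2 * pi * k / (q + 1))" 1])
  show "sin (2 * pi * real (k + (q + 1)) / real (q + 1)) = sin (2 * pi * real k / real (q + 1))" for k
  proof -
    have "2 * pi * real (k + (q + 1)) / real (q + 1) = 2 * pi * real k / real (q + 1) + 2 * pi"
      by (simp add: field_simps)
    then show ?thesis by simp
  qed
  show "sin (2 * pi * real (q * k) / real (q + 1)) = - 1 * sin (2 * pi * real k / real (q + 1))" for k
  proof -
    have "2 * pi * real (q * k) / real (q + 1) = real (2 * k) * pi - 2 * pi * real k / real (q + 1)"
      by (simp add: field_simps)
    then show ?thesis by (simp add: sin_diff)
  qed
  have "sin (2 * pi / real (q + 1)) > 0"
    using assms by (intro sin_gt_zero) (auto simp: field_simps)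
  then show "sin (2 * pi * real 1 / real (q + 1)) \<noteq> 0" by simp
qed simp

lemma pcompose_monom: "pcompose (monom a m) p = smult a (p ^ m)"
  for a :: "'a::comm_ring_1"
  by (induction m) (simp_all add: monom_Suc monom_0 pcompose_pCons)

lemma linear_factor_dvd_one_minus_monom:
  fixes b :: "'a::comm_ring_1"
  shows "[:1, -b:] dvd 1 - monom (b ^ n) n"
proof -
  have "[:1, -b:] * (\<Sum>j<n. monom (b ^ j) j) = 1 - monom (b ^ n) n"
  proof (induction n)
    case (Suc n)
    have "[:1, -b:] * monom (b ^ n) n = monom (b ^ n) n - monom (b ^ Suc n) (Suc n)"
      by (simp add: poly_eq_iff coeff_pCons split: nat.split)
    then show ?case using Suc by (simp add: distrib_left)
  qed simp
  then show ?thesis by (metis dvd_triv_left)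
qed

lemma prod_linear_factors_dvd_pcompose_monom:
  fixes M :: "'a::comm_ring_1 multiset"
  shows "(\<Prod>b\<in>#M. [:1, -b:]) dvd pcompose (\<Prod>b\<in>#M. [:1, -(b ^ q):]) (monom 1 q)"
proof (induction M)
  case (add b M)
  have "pcompose [:1, -(b ^ q):] (monom 1 q) = 1 - monom (b ^ q) q"
    by (simp add: pcompose_pCons monom_altdef)
  then have "[:1, -b:] dvd pcompose [:1, -(b ^ q):] (monom 1 q)"
    using linear_factor_dvd_one_minus_monom by metis
  then show ?case
    using add by (simp only: image_mset_add_mset prod_mset.add_mset pcompose_mult mult_dvd_mono)
qed simp

lemma prod_linear_factors_dvd_one_minus_monom_power:
  fixes M :: "'a::comm_ring_1 multiset"
  assumes "\<And>b. b \<in># M \<Longrightarrow> b ^ N = 1"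
  shows "(\<Prod>b\<in>#M. [:1, -b:]) dvd (1 - monom 1 N) ^ size M"
  using assms
proof (induction M)
  case (add b M)
  then have "[:1, -b:] dvd 1 - monom 1 N"
    using linear_factor_dvd_one_minus_monom[of b N] by simp
  moreover have "(\<Prod>b\<in>#M. [:1, -b:]) dvd (1 - monom 1 N) ^ size M" using add by simp
  ultimately show ?case
    by (simp only: image_mset_add_mset prod_mset.add_mset size_add_mset power_Suc) (rule mult_dvd_mono)
qed simp

lemma reflect_poly_prod_mset:
  fixes M :: "'a::{comm_semiring_1,semiring_no_zero_divisors} poly multiset"
  shows "reflect_poly (prod_mset M) = prod_mset (image_mset reflect_poly M)"
  by (induction M) (simp_all add: reflect_poly_mult)

lemma in_proots_reflect_poly_iff:
  fixes B :: "'a::field poly"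
  assumes "B \<noteq> 0"
  shows "b \<in># proots (reflect_poly B) \<longleftrightarrow> b \<noteq> 0 \<and> poly B (inverse b) = 0"
  using assms by (cases "b = 0") (simp_all add: poly_reflect_poly_nz)

lemma complex_poly_decompose_reflected:
  fixes B :: "complex poly"
  assumes "poly B 0 \<noteq> 0"
  shows "B = smult (poly B 0) (\<Prod>b\<in>#proots (reflect_poly B). [:1, -b:])"
proof -
  have B0: "coeff B 0 \<noteq> 0" using assms by (simp add: poly_0_coeff_0)
  have "reflect_poly [:-b, 1:] = [:1, -b:]" for b :: complex
    by (auto simp: poly_eq_iff coeff_reflect_poly coeff_pCons split: nat.split)
  then have "B = reflect_poly (smult (lead_coeff (reflect_poly B))
                   (\<Prod>b\<in>#proots (reflect_poly B). [:-b, 1:]))"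
    using B0 complex_poly_decompose_multiset[of "reflect_poly B"] by simp
  also have "\<dots> = smult (poly B 0) (\<Prod>b\<in>#proots (reflect_poly B). [:1, -b:])"
    using B0 by (simp add: reflect_poly_smult reflect_poly_prod_mset image_mset.compositionality o_def
        \<open>\<And>b. reflect_poly [:-b, 1:] = [:1, -b:]\<close> poly_0_coeff_0 coeff_reflect_poly)
  finally show ?thesis .
qed

lemma fps_mult_prod_reflected_roots:
  fixes F :: "complex fps"
  assumes "F * fps_of_poly B = fps_of_poly A" "poly B 0 \<noteq> 0"
  shows "F * fps_of_poly (\<Prod>b\<in>#proots (reflect_poly B). [:1, -b:])
           = fps_of_poly (smult (inverse (poly B 0)) A)"
proof -
  have "fps_of_poly A = fps_const (poly B 0) * (F * fps_of_poly (\<Prod>b\<in>#proots (reflect_poly B). [:1, -b:]))"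
    using assms(1) complex_poly_decompose_reflected[OF assms(2)]
    by (metis fps_of_poly_smult mult.left_commute)
  then show ?thesis
    using assms(2) by (simp add: fps_of_poly_smult fps_const_mult[symmetric] mult.assoc[symmetric]
        del: fps_const_mult)
qed

lemma fps_fraction_coprime:
  fixes F :: "'a::field_gcd fps"
  assumes "F * fps_of_poly B = fps_of_poly A" "poly B 0 \<noteq> 0"
  obtains A' B' where "F * fps_of_poly B' = fps_of_poly A'" "poly B' 0 \<noteq> 0" "coprime A' B'"
proof
  define g where "g = gcd A B"
  have "B \<noteq> 0" using assms(2) by auto
  then have "g \<noteq> 0" by (simp add: g_def)
  have A: "A = g * (A div g)" and B: "B = g * (B div g)" by (simp_all add: g_def)
  show "coprime (A div g) (B div g)"
    unfolding g_def using \<open>B \<noteq> 0\<close> by (intro div_gcd_coprime) auto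
  show "poly (B div g) 0 \<noteq> 0" using assms(2) B by (metis mult_zero_right poly_mult)
  have "fps_of_poly g * (F * fps_of_poly (B div g)) = fps_of_poly g * fps_of_poly (A div g)"
    using assms(1) A B by (metis fps_of_poly_mult mult.left_commute)
  then show "F * fps_of_poly (B div g) = fps_of_poly (A div g)"
    using \<open>g \<noteq> 0\<close> by (simp add: fps_of_poly_eq_iff[of g 0, simplified])
qed

lemma decimate_eigen_denominator_dvd:
  fixes F :: "complex fps"
  assumes q: "q \<ge> 1"
    and rational: "F * fps_of_poly B = fps_of_poly A" "poly B 0 \<noteq> 0" "coprime A B"
    and eigen: "fps_decimate q F = fps_const c * F" "c \<noteq> 0"
  shows "B dvd (\<Prod>b\<in>#proots (reflect_poly B). [:1, -(b ^ q):])"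
proof -
  define R where "R = proots (reflect_poly B)"
  define D where "D = (\<Prod>b\<in>#R. [:1, -(b ^ q):])"
  obtain S where S: "pcompose D (monom 1 q) = (\<Prod>b\<in>#R. [:1, -b:]) * S"
    using prod_linear_factors_dvd_pcompose_monom unfolding D_def by (metis dvdE)
  have "F * fps_of_poly (pcompose D (monom 1 q))
        = (F * fps_of_poly (\<Prod>b\<in>#R. [:1, -b:])) * fps_of_poly S"
    by (simp add: S fps_of_poly_mult mult.assoc)
  also have "\<dots> = fps_of_poly (smult (inverse (poly B 0)) A * S)"
    using fps_mult_prod_reflected_roots[OF rational(1,2)] by (simp add: R_def fps_of_poly_mult)
  finally obtain P where "fps_decimate q (F * fps_of_poly (pcompose D (monom 1 q))) = fps_of_poly P"
    using fps_decimate_fps_of_poly[OF q] by metis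
  then have P: "fps_const c * F * fps_of_poly D = fps_of_poly P"
    using eigen(1) by (simp add: fps_decimate_mult_pcompose_monom[OF q])
  have "fps_of_poly (smult c (A * D)) = fps_const c * F * fps_of_poly D * fps_of_poly B"
    using rational(1) by (simp add: fps_of_poly_smult fps_of_poly_mult mult_ac)
  also have "\<dots> = fps_of_poly (P * B)" by (simp add: P fps_of_poly_mult)
  finally have "B dvd smult c (A * D)" by (simp add: fps_of_poly_eq_iff)
  then show ?thesis
    using eigen(2) rational(3) unfolding D_def R_def
    by (metis dvd_smult_cancel coprime_commute coprime_dvd_mult_right_iff)
qed

lemma decimate_eigen_denominator_root_has_qth_root:
  fixes F :: "complex fps"
  assumes "q \<ge> 1" "F * fps_of_poly B = fps_of_poly A" "poly B 0 \<noteq> 0" "coprime A B"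
    and "fps_decimate q F = fps_const c * F" "c \<noteq> 0"
    and b: "b \<in># proots (reflect_poly B)"
  shows "\<exists>b' \<in># proots (reflect_poly B). b' ^ q = b"
proof -
  have "B \<noteq> 0" using assms(3) by auto
  then have "b \<noteq> 0" "poly B (inverse b) = 0"
    using b in_proots_reflect_poly_iff[of B b] by blast+
  then have "poly (\<Prod>b\<in>#proots (reflect_poly B). [:1, -(b ^ q):]) (inverse b) = 0"
    using decimate_eigen_denominator_dvd[OF assms(1-6)] by (metis dvdE mult_eq_0_iff poly_mult)
  then obtain b' where "b' \<in># proots (reflect_poly B)" "poly [:1, -(b' ^ q):] (inverse b) = 0"
    unfolding poly_prod_mset prod_mset_zero_iff by auto
  moreover from this(2) have "b' ^ q = b"
    using \<open>b \<noteq> 0\<close> by (simp add: field_simps)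
  ultimately show ?thesis by blast
qed

lemma finite_range_imp_repeat:
  fixes f :: "nat \<Rightarrow> 'a"
  assumes "finite (range f)"
  shows "\<exists>i j. i < j \<and> f i = f j"
proof -
  have "\<not> inj f" using assms finite_imageD by blast
  then obtain i j where "i \<noteq> j" "f i = f j" unfolding inj_def by blast
  then show ?thesis by (metis nat_neq_iff)
qed

lemma common_root_of_unity_exponent:
  fixes S :: "'a::comm_monoid_mult set"
  assumes "finite S" "\<And>z. z \<in> S \<Longrightarrow> \<exists>M\<ge>1. z ^ M = 1"
  shows "\<exists>N\<ge>1. \<forall>z\<in>S. z ^ N = 1"
  using assms
proof (induction S rule: finite_induct)
  case (insert z S)
  obtain N where N: "N \<ge> 1" "\<forall>z\<in>S. z ^ N = 1" using insert by auto
  obtain M where M: "M \<ge> 1" "z ^ M = 1" using insert by auto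
  have "z ^ (M * N) = 1" using M(2) by (simp add: power_mult)
  moreover have "z' ^ (M * N) = 1" if "z' \<in> S" for z'
    using N(2) that by (metis mult.commute power_mult power_one)
  ultimately have "\<forall>z'\<in>insert z S. z' ^ (M * N) = 1" by blast
  moreover have "M * N \<ge> 1" using N(1) M(1) by simp
  ultimately show ?case by blast
qed auto

lemma root_of_unity_if_closed_under_roots:
  fixes S :: "'a::idom set"
  assumes "finite S" "0 \<notin> S" "q \<ge> 2" "\<And>b. b \<in> S \<Longrightarrow> \<exists>b'\<in>S. b' ^ q = b" "z \<in> S"
  shows "\<exists>M\<ge>1. z ^ M = 1"
proof -
  obtain root where root: "\<And>b. b \<in> S \<Longrightarrow> root b \<in> S \<and> root b ^ q = b"
    using assms(4) by metis
  define w where "w j = (root ^^ j) z" for j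
  have w: "w j \<in> S \<and> w j ^ (q ^ j) = z" for j
  proof (induction j)
    case (Suc j)
    have "w (Suc j) = root (w j)" by (simp add: w_def)
    then show ?case using Suc root[of "w j"] by (simp add: power_mult)
  qed (simp add: w_def assms(5))
  then have "finite (range w)" using assms(1) by (auto intro: finite_subset)
  then obtain i j where ij: "i < j" "w i = w j" using finite_range_imp_repeat by blast
  define d where "d = j - i"
  have "q ^ j = q ^ i * q ^ d" using ij(1) by (simp add: d_def power_add[symmetric])
  then have "z ^ (q ^ d) = w i ^ (q ^ j)" using w[of i] by (simp add: power_mult)
  also have "\<dots> = z" using w[of j] ij(2) by simp
  finally have "z ^ (q ^ d) = z" .
  moreover have "q ^ d \<ge> 2"
    using assms(3) ij(1) self_le_power[of q d] unfolding d_def by simp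
  then obtain e where e: "q ^ d = Suc e" "e \<ge> 1" by (intro that[of "q ^ d - 1"]) auto
  moreover have "z \<noteq> 0" using assms(2,5) by auto
  ultimately have "z ^ e = 1" by simp
  then show ?thesis using e(2) by blast
qed

lemma fps_cyclotomic_denominator:
  fixes F :: "complex fps"
  assumes "F * fps_of_poly B = fps_of_poly A" "poly B 0 \<noteq> 0"
    and "\<And>b. b \<in># proots (reflect_poly B) \<Longrightarrow> b ^ N = 1"
  obtains P D where "F * (1 - fps_X ^ N) ^ D = fps_of_poly P"
proof -
  define R where "R = proots (reflect_poly B)"
  obtain K where K: "(1 - monom 1 N) ^ size R = (\<Prod>b\<in>#R. [:1, -b:]) * K"
    using prod_linear_factors_dvd_one_minus_monom_power[of R N] assms(3) unfolding R_def
    by (metis dvdE)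
  have "F * (1 - fps_X ^ N) ^ size R = F * fps_of_poly (\<Prod>b\<in>#R. [:1, -b:]) * fps_of_poly K"
    using arg_cong[OF K, of fps_of_poly]
    by (simp add: fps_of_poly_power fps_of_poly_diff fps_of_poly_monom' fps_of_poly_mult mult.assoc)
  also have "\<dots> = fps_of_poly (smult (inverse (poly B 0)) A * K)"
    using fps_mult_prod_reflected_roots[OF assms(1,2)] by (simp add: R_def fps_of_poly_mult)
  finally show ?thesis using that by blast
qed

lemma forward_difference_surj:
  fixes Q :: "'a::field_char_0 poly"
  shows "\<exists>R. pcompose R [:1, 1:] - R = Q"
proof (induction "degree Q" arbitrary: Q rule: less_induct)
  case less
  define n where "n = degree Q"
  define R0 where "R0 = monom (lead_coeff Q / of_nat (Suc n)) (Suc n)"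
  define \<Delta>R0 where "\<Delta>R0 = pcompose R0 [:1, 1:] - R0"
  define Q' where "Q' = Q - \<Delta>R0"
  have coeff_\<Delta>R0: "coeff \<Delta>R0 i
      = lead_coeff Q / of_nat (Suc n) * (of_nat (Suc n choose i) - (if i = Suc n then 1 else 0))" for i
  proof -
    have "coeff ([:1, 1:] ^ Suc n) i = (of_nat (Suc n choose i) :: 'a)"
    proof (cases "i \<le> Suc n")
      case True then show ?thesis by (subst coeff_linear_poly_power) simp_all
    next
      case False then show ?thesis by (simp add: coeff_eq_0 degree_linear_power del: power_Suc)
    qed
    then show ?thesis
      by (simp add: \<Delta>R0_def R0_def pcompose_monom algebra_simps del: power_Suc of_nat_Suc)
  qed
  have "coeff Q' i = 0" if "i \<ge> n" for i
  proof (cases "i = n")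
    case True then show ?thesis by (simp add: Q'_def coeff_\<Delta>R0 n_def del: of_nat_Suc)
  next
    case False
    then have "i > n" using that by simp
    then show ?thesis
      by (cases "i = Suc n") (simp_all add: Q'_def coeff_\<Delta>R0 n_def coeff_eq_0 del: of_nat_Suc)
  qed
  then have "Q' = 0 \<or> degree Q' < degree Q"
    using degree_lessI[of Q' n] unfolding n_def by (cases "n = 0") (auto simp: poly_eq_iff)
  then obtain R' where R': "pcompose R' [:1, 1:] - R' = Q'"
    using less by (metis cancel_comm_monoid_add_class.diff_cancel pcompose_0)
  have "pcompose (R0 + R') [:1, 1:] - (R0 + R') = Q"
    using R' by (simp add: pcompose_add Q'_def \<Delta>R0_def algebra_simps)
  then show ?case by blast
qed

lemma eventually_poly_if_differences_eventually_poly: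
  fixes s :: "nat \<Rightarrow> 'a::field_char_0"
  assumes "\<And>j. j \<ge> J \<Longrightarrow> s (Suc j) - s j = poly Q (of_nat j)"
  shows "\<exists>Q'. \<forall>j\<ge>J. s j = poly Q' (of_nat j)"
proof -
  obtain R where R: "pcompose R [:1, 1:] - R = Q"
    using forward_difference_surj by blast
  have "s j - poly R (of_nat j) = s J - poly R (of_nat J)" if "j \<ge> J" for j
    using that
  proof (induction j rule: dec_induct)
    case (step j)
    have "poly R (of_nat (Suc j)) - poly R (of_nat j) = poly Q (of_nat j)"
      using arg_cong[OF R, of "\<lambda>P. poly P (of_nat j)"] by (simp add: poly_pcompose add.commute)
    then show ?case using step assms[of j] by (simp add: algebra_simps)
  qed simp
  then have "\<forall>j\<ge>J. s j = poly (R + [:s J - poly R (of_nat J):]) (of_nat j)"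
    by (simp add: algebra_simps)
  then show ?thesis by blast
qed

lemma fps_coeffs_on_progression_eventually_poly:
  fixes G :: "'a::field_char_0 fps"
  assumes N: "N \<ge> 1" and "G * (1 - fps_X ^ N) ^ D = fps_of_poly P"
  shows "\<exists>Q J. \<forall>j\<ge>J. G $ (r + j * N) = poly Q (of_nat j)"
  using assms(2)
proof (induction D arbitrary: G P)
  case 0
  have "G $ (r + j * N) = 0" if "j > degree P" for j
  proof -
    have "r + j * N > degree P" using that N by (metis le_add2 le_trans mult_le_mono2 mult.right_neutral not_le)
    then show ?thesis using 0 by (simp add: coeff_eq_0)
  qed
  then have "\<forall>j\<ge>Suc (degree P). G $ (r + j * N) = poly 0 (of_nat j)" by simp
  then show ?case by blast
next
  case (Suc D)
  define G' where "G' = G * (1 - fps_X ^ N)"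
  have "G' * (1 - fps_X ^ N) ^ D = fps_of_poly P"
    using Suc.prems by (simp add: G'_def mult.assoc mult.commute)
  then obtain Q J where Q: "\<forall>j\<ge>J. G' $ (r + j * N) = poly Q (of_nat j)"
    using Suc.IH by blast
  have "G $ (r + Suc j * N) - G $ (r + j * N) = poly (pcompose Q [:1, 1:]) (of_nat j)" if "j \<ge> J" for j
  proof -
    have "G' $ (r + Suc j * N) = G $ (r + Suc j * N) - (fps_X ^ N * G) $ (r + Suc j * N)"
      by (simp add: G'_def right_diff_distrib mult.commute)
    also have "(fps_X ^ N * G) $ (r + Suc j * N) = G $ (r + j * N)"
      by (simp add: fps_X_power_mult_nth)
    finally have "G' $ (r + Suc j * N) = G $ (r + Suc j * N) - G $ (r + j * N)" .
    moreover have "G' $ (r + Suc j * N) = poly Q (of_nat (Suc j))"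
      using that by (intro Q[rule_format]) simp
    ultimately show ?thesis by (simp add: poly_pcompose add.commute)
  qed
  then show ?case
    using eventually_poly_if_differences_eventually_poly[of J "\<lambda>j. G $ (r + j * N)"] by blast
qed

lemma fps_coeffs_on_residue_class_eventually_poly:
  fixes G :: "'a::field_char_0 fps"
  assumes N: "N \<ge> 1" and "G * (1 - fps_X ^ N) ^ D = fps_of_poly P"
  obtains Q K where "\<And>k. k \<ge> K \<Longrightarrow> k mod N = r \<Longrightarrow> G $ k = poly Q (of_nat k)"
proof -
  obtain Q J where Q: "\<And>j. j \<ge> J \<Longrightarrow> G $ (r + j * N) = poly Q (of_nat j)"
    using fps_coeffs_on_progression_eventually_poly[OF assms] by blast
  have "G $ k = poly (pcompose Q [:- of_nat r / of_nat N, 1 / of_nat N:]) (of_nat k)"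
    if "k \<ge> r + J * N" "k mod N = r" for k
  proof -
    have k: "k = r + (k div N) * N" using that(2) by (metis add.commute div_mult_mod_eq)
    then have "J * N \<le> (k div N) * N" using that(1) by linarith
    then have "k div N \<ge> J" using N by simp
    moreover have "(of_nat (k div N) :: 'a) = (of_nat k - of_nat r) / of_nat N"
      using N by (subst (2) k) (simp add: field_simps)
    ultimately show ?thesis using Q[of "k div N"] k by (simp add: poly_pcompose diff_divide_distrib)
  qed
  then show ?thesis using that by blast
qed

lemma poly_scaling_eigenvalue:
  fixes Q :: "'a::idom poly"
  assumes "infinite {x. poly Q (t * x) = \<mu> * poly Q x}" "Q \<noteq> 0"
  shows "\<mu> = t ^ degree Q"
proof -
  define H where "H = pcompose Q [:0, t:] - smult \<mu> Q"
  have "{x. poly Q (t * x) = \<mu> * poly Q x} = {x. poly H x = 0}"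
    by (simp add: H_def poly_pcompose mult.commute)
  then have "H = 0" using assms(1) poly_roots_finite by metis
  then have "coeff (pcompose Q [:0, t:]) (degree Q) = coeff (smult \<mu> Q) (degree Q)"
    unfolding H_def by simp
  then show ?thesis using assms(2) by (simp add: coeff_pcompose_linear)
qed

lemma power_mod_eventually_periodic:
  fixes q N :: nat
  assumes "N \<ge> 1"
  obtains J L where "L \<ge> 1" "\<And>i. q ^ (J + i * L) mod N = q ^ J mod N"
proof -
  have "range (\<lambda>j. q ^ j mod N) \<subseteq> {..<N}" using assms by auto
  then have "finite (range (\<lambda>j. q ^ j mod N))" by (rule finite_subset) simp
  then obtain J J' where J: "J < J'" "q ^ J mod N = q ^ J' mod N"
    using finite_range_imp_repeat by blast
  define L where "L = J' - J"
  have "q ^ (J + i * L) mod N = q ^ J mod N" for i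
  proof (induction i)
    case (Suc i)
    have "q ^ (J + Suc i * L) mod N = (q ^ L * (q ^ (J + i * L) mod N)) mod N"
      by (simp add: mod_mult_right_eq power_add algebra_simps)
    also have "\<dots> = q ^ J' mod N"
      using Suc J(1) by (simp add: mod_mult_right_eq L_def power_add[symmetric])
    finally show ?case using J(2) by simp
  qed simp
  moreover have "L \<ge> 1" using J(1) by (simp add: L_def)
  ultimately show ?thesis using that by blast
qed

lemma fps_decimate_eigenvalue_power_eq:
  fixes F :: "'a::field_char_0 fps"
  assumes q: "q \<ge> 2" and N: "N \<ge> 1" and cyclotomic: "F * (1 - fps_X ^ N) ^ D = fps_of_poly P"
    and eigen: "fps_decimate q F = fps_const c * F" "c \<noteq> 0"
    and k0: "F $ k0 \<noteq> 0" "k0 \<ge> 1"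
  shows "\<exists>L\<ge>1. \<exists>e. c ^ L = of_nat (q ^ (L * e))"
proof -
  obtain J L where L: "L \<ge> 1" "\<And>i. q ^ (J + i * L) mod N = q ^ J mod N"
    using power_mod_eventually_periodic[OF N] by blast
  define p where "p i = q ^ (J + i * L) * k0" for i
  define t where "t = q ^ L"
  obtain Q K where Q: "\<And>k. k \<ge> K \<Longrightarrow> k mod N = q ^ J * k0 mod N \<Longrightarrow> F $ k = poly Q (of_nat k)"
    using fps_coeffs_on_residue_class_eventually_poly[OF N cyclotomic] by blast
  have F_p: "F $ p i = c ^ (J + i * L) * F $ k0" for i
    unfolding p_def by (rule fps_decimate_eigen_nth[OF eigen(1)])
  have "strict_mono p"
    using q L(1) k0(2) one_less_power[of q L] unfolding strict_mono_Suc_iff by (simp add: p_def power_add)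
  then have "p i \<ge> i" for i by (rule strict_mono_imp_increasing)
  moreover have "p i mod N = q ^ J * k0 mod N" for i
    using L(2) by (metis p_def mod_mult_left_eq)
  ultimately have Q_p: "F $ p i = poly Q (of_nat (p i))" if "i \<ge> K" for i
    using Q that by (meson le_trans)
  have "poly Q (of_nat t * of_nat (p i)) = c ^ L * poly Q (of_nat (p i))" if "i \<ge> K" for i
  proof -
    have "of_nat t * of_nat (p i) = (of_nat (p (Suc i)) :: 'a)"
      by (simp add: t_def p_def power_add algebra_simps)
    then have "poly Q (of_nat t * of_nat (p i)) = F $ p (Suc i)" using Q_p[of "Suc i"] that by simp
    also have "\<dots> = c ^ L * F $ p i" by (simp add: F_p power_add algebra_simps)
    finally show ?thesis using Q_p[of i] that by simp
  qed
  then have "(\<lambda>i. of_nat (p i)) ` {K..} \<subseteq> {x. poly Q (of_nat t * x) = c ^ L * poly Q x}"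
    by auto
  moreover have "infinite ((\<lambda>i. of_nat (p i) :: 'a) ` {K..})"
    using \<open>strict_mono p\<close> strict_mono_imp_inj_on
    by (auto simp: finite_image_iff inj_on_def strict_mono_eq infinite_Ici)
  moreover have "Q \<noteq> 0" using Q_p[of K] F_p[of K] eigen(2) k0(1) by auto
  ultimately have "c ^ L = of_nat t ^ degree Q"
    by (metis poly_scaling_eigenvalue infinite_super)
  then show ?thesis using L(1) by (auto simp: t_def power_mult)
qed

lemma rational_fps_decimate_eigenvalue_power_eq:
  fixes F :: "complex fps"
  assumes q: "q \<ge> 2" and rational: "F * fps_of_poly B = fps_of_poly A" "poly B 0 \<noteq> 0"
    and "F \<noteq> 0" and eigen: "fps_decimate q F = fps_const c * F" "c \<noteq> 0"
  shows "\<exists>L\<ge>1. \<exists>e. c ^ L = of_nat (q ^ (L * e))"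
proof (cases "c = 1")
  case True
  then have "c ^ 1 = of_nat (q ^ (1 * 0))" by simp
  then show ?thesis by blast
next
  case False
  obtain A' B' where rational': "F * fps_of_poly B' = fps_of_poly A'" "poly B' 0 \<noteq> 0" "coprime A' B'"
    using fps_fraction_coprime[OF rational] by blast
  define S where "S = set_mset (proots (reflect_poly B'))"
  have "B' \<noteq> 0" using rational'(2) by auto
  then have "0 \<notin> S" by (simp add: S_def in_proots_reflect_poly_iff)
  moreover have "\<exists>b'\<in>S. b' ^ q = b" if "b \<in> S" for b
    using decimate_eigen_denominator_root_has_qth_root[OF _ rational' eigen] q that unfolding S_def by simp
  ultimately obtain N where N: "N \<ge> 1" "\<forall>b\<in>S. b ^ N = 1"
    using common_root_of_unity_exponent[of S] root_of_unity_if_closed_under_roots[of S q] q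
    unfolding S_def by auto
  then obtain P D where cyclotomic: "F * (1 - fps_X ^ N) ^ D = fps_of_poly P"
    using fps_cyclotomic_denominator[OF rational'(1,2)] unfolding S_def by blast
  obtain k0 where k0: "F $ k0 \<noteq> 0" using \<open>F \<noteq> 0\<close> fps_nonzero_nth by blast
  have "F $ 0 = c * F $ 0" using fps_decimate_eigen_nth[OF eigen(1), of 1 0] by simp
  then have "k0 \<ge> 1" using k0 False by (cases k0) auto
  then show ?thesis
    using fps_decimate_eigenvalue_power_eq[OF q N(1) cyclotomic eigen k0] by blast
qed

lemma spec_U_power_eq_power:
  assumes q: "q \<ge> 2" and "c \<in> spec_U q" "c \<noteq> 0"
  shows "\<exists>L\<ge>1. \<exists>e. c ^ L = real (q ^ (L * e))"
proof -
  obtain f where f: "f \<in> ratfun_space" "f \<noteq> 0" "fps_decimate q f = fps_const c * f"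
    using assms(2) unfolding spec_U_def U_op_eq_fps_decimate by blast
  obtain A B where AB: "f * fps_of_poly B = fps_of_poly A" "poly B 0 \<noteq> 0"
    using f(1) unfolding ratfun_space_iff by blast
  define F where "F = Abs_fps (\<lambda>k. complex_of_real (f $ k))"
  have "F * fps_of_poly (map_poly of_real B) = fps_of_poly (map_poly of_real A)"
  proof (rule fps_ext)
    fix n
    have "(F * fps_of_poly (map_poly of_real B)) $ n = of_real ((f * fps_of_poly B) $ n)"
      by (simp add: fps_mult_nth F_def coeff_map_poly)
    then show "(F * fps_of_poly (map_poly of_real B)) $ n = fps_of_poly (map_poly of_real A) $ n"
      by (simp add: AB(1) coeff_map_poly)
  qed
  moreover have "poly (map_poly of_real B) 0 \<noteq> 0"
    using AB(2) by (simp add: poly_0_coeff_0 coeff_map_poly)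
  moreover have "F \<noteq> 0" using f(2) by (metis F_def fps_ext fps_nth_Abs_fps fps_zero_nth of_real_eq_0_iff)
  moreover have "fps_decimate q F = fps_const (of_real c) * F"
    using arg_cong[OF f(3), of "\<lambda>G. G $ _"] by (simp add: fps_eq_iff F_def)
  ultimately obtain L e where "L \<ge> 1" "(of_real c) ^ L = (of_nat (q ^ (L * e)) :: complex)"
    using rational_fps_decimate_eigenvalue_power_eq[OF q] assms(3) by (metis of_real_eq_0_iff)
  then show ?thesis by (metis of_real_eq_iff of_real_of_nat_eq of_real_power)
qed

lemma abs_eq_1_if_powers_of_coprime:
  fixes x :: real and m n :: nat
  assumes "m \<ge> 2" "coprime m n" "L1 \<ge> 1" "L2 \<ge> 1"
    and "x ^ L1 = real (m ^ (L1 * e1))" "x ^ L2 = real (n ^ (L2 * e2))"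
  shows "\<bar>x\<bar> = 1"
proof -
  have "real (m ^ (L1 * e1 * L2)) = real (n ^ (L2 * e2 * L1))"
    using assms(5,6) by (metis mult.commute power_mult of_nat_power)
  then have "m ^ (L1 * e1 * L2) = n ^ (L2 * e2 * L1)" by (simp only: of_nat_eq_iff)
  moreover have "coprime (m ^ (L1 * e1 * L2)) (n ^ (L2 * e2 * L1))" using assms(2) by simp
  ultimately have "m ^ (L1 * e1 * L2) = 1" by simp
  then have "e1 = 0" using assms(1,3,4) by (simp add: power_eq_1_iff)
  then have "\<bar>x\<bar> ^ L1 = 1 ^ L1" using assms(5) by (simp add: power_abs[symmetric])
  then show ?thesis by (rule power_eq_imp_eq_base) (use assms(3) in auto)
qed

theorem mainTheorem14:
  fixes m n :: nat
  assumes "m \<ge> 2" and "n \<ge> 2" and "coprime m n"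
  shows "spec_U m \<inter> spec_U n = {0, 1, -1}"
proof
  show "{0, 1, -1} \<subseteq> spec_U m \<inter> spec_U n"
    using assms zero_in_spec_U one_in_spec_U minus_one_in_spec_U by auto
  show "spec_U m \<inter> spec_U n \<subseteq> {0, 1, -1}"
  proof
    fix c assume c: "c \<in> spec_U m \<inter> spec_U n"
    show "c \<in> {0, 1, -1}"
    proof (cases "c = 0")
      case False
      obtain L1 e1 where "L1 \<ge> 1" "c ^ L1 = real (m ^ (L1 * e1))"
        using spec_U_power_eq_power[OF assms(1) _ False] c by blast
      moreover obtain L2 e2 where "L2 \<ge> 1" "c ^ L2 = real (n ^ (L2 * e2))"
        using spec_U_power_eq_power[OF assms(2) _ False] c by blast
      ultimately have "\<bar>c\<bar> = 1" using abs_eq_1_if_powers_of_coprime assms(1,3) by blast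
      then show ?thesis by auto
    qed simp
  qed
qed

end
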